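(* For every integer $h \geq 3$, \[ \frac{\sin\bigl(\pi\sqrt{3/h}\bigr)}{\pi\sqrt{3/h}} < \left( \frac{4}{3 - \cos(\pi/h)} - 1 \right)^h . \] Consequently $x_h < \pi\sqrt{3/h}$ for all $h \geq 3$, where $x_h$ is the unique real number in $(0,\pi)$ with $\frac{\sin x_h}{x_h} = \left( \frac{4}{3-\cos(\pi/h)} - 1\right)^h$. *)

theory Defs
  imports Complex_Main
begin

end

theory Submission
  imports Defs "HOL-Analysis.Complex_Transcendental"
begin

text \<open>
  Put \<open>n = h\<close>, \<open>p = \<pi>\<^sup>2\<close> and \<open>y = \<pi>\<surd>(3/n)\<close>, so \<open>y\<^sup>2 = 3p/n\<close>.
  On the left, the Taylor bound \<open>sin y \<le> y - y\<^sup>3/6 + y\<^sup>5/120\<close> gives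
  \<open>sin y / y \<le> 1 - p/(2n) + 3p\<^sup>2/(40n\<^sup>2)\<close>. On the right,
  \<open>4/(3 - cos a) - 1 = (1 - sin\<^sup>2(a/2))/(1 + sin\<^sup>2(a/2)) \<ge> (4 - a\<^sup>2)/(4 + a\<^sup>2)\<close>,
  which for \<open>a = \<pi>/n\<close> is \<open>1 - v\<close> with \<open>v = 2p/(4n\<^sup>2 + p)\<close>; and \<open>(1 - v)\<^sup>n\<close> is
  bounded below by its binomial expansion truncated after the cubic term.
  Comparing the two rational functions of \<open>n\<close> and \<open>p\<close> is a polynomial inequality,
  checked for \<open>n \<ge> 3\<close> using a tight enclosure of \<open>\<pi>\<^sup>2\<close>.
  The bound on \<open>x\<^sub>h\<close> follows since \<open>sin x / x\<close> decreases on \<open>(0, \<pi>]\<close>.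
\<close>

lemma sin_le_taylor5:
  fixes y :: real
  assumes "0 \<le> y" "y \<le> 8"
  shows "sin y \<le> y - y^3/6 + y^5/120"
proof -
  have taylor7: "(\<Sum>m<8. sin_coeff m * y ^ m) = y - y^3/6 + y^5/120 - y^7/5040"
  proof -
    have "{..<8::nat} = {0,1,2,3,4,5,6,7}" by auto
    then show ?thesis by (simp add: sin_coeff_def fact_numeral)
  qed
  have "\<bar>sin y - (\<Sum>m<8. sin_coeff m * y ^ m)\<bar> \<le> inverse (fact 8) * \<bar>y\<bar> ^ 8"
    by (rule Maclaurin_sin_bound)
  then have "\<bar>sin y - (y - y^3/6 + y^5/120 - y^7/5040)\<bar> \<le> y^8 / 40320"
    using assms unfolding taylor7 by (simp add: fact_numeral)
  then have "sin y - (y - y^3/6 + y^5/120 - y^7/5040) \<le> y^8 / 40320"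
    by (rule abs_le_D1)
  \<comment> \<open>The remainder \<open>y\<^sup>8/8!\<close> is absorbed by the term \<open>y\<^sup>7/7!\<close> exactly when \<open>y \<le> 8\<close>.\<close>
  moreover have "y^8 \<le> 8 * y^7"
    using assms mult_right_mono[of y 8 "y^7"] by (simp add: numeral_eq_Suc)
  ultimately show ?thesis by linarith
qed

lemma sinc_le_taylor4:
  fixes y :: real
  assumes "0 < y" "y \<le> 8"
  shows "sin y / y \<le> 1 - y^2/6 + (y^2)^2/120"
proof -
  have "sin y / y \<le> (y - y^3/6 + y^5/120) / y"
    using sin_le_taylor5[of y] assms by (intro divide_right_mono) auto
  also have "\<dots> = 1 - y^2/6 + (y^2)^2/120"
    using assms by (simp add: field_simps numeral_eq_Suc)
  finally show ?thesis .
qed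

lemma x_cos_le_sin:
  fixes x :: real
  assumes "0 \<le> x" "x \<le> pi"
  shows "x * cos x \<le> sin x"
proof -
  have "(\<lambda>t. t * cos t - sin t) x \<le> (\<lambda>t. t * cos t - sin t) 0"
  proof (rule DERIV_nonpos_imp_nonincreasing[OF assms(1)])
    fix t :: real
    assume t: "0 \<le> t" "t \<le> x"
    have "DERIV (\<lambda>t. t * cos t - sin t) t :> - (t * sin t)"
      by (auto intro!: derivative_eq_intros)
    moreover have "0 \<le> t * sin t"
      using t assms sin_ge_zero[of t] by simp
    ultimately show "\<exists>d. DERIV (\<lambda>t. t * cos t - sin t) t :> d \<and> d \<le> 0"
      by (intro exI[of _ "- (t * sin t)"]) simp
  qed
  then show ?thesis by simp
qed

lemma sinc_antimono:
  fixes x y :: real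
  assumes "0 < y" "y \<le> x" "x \<le> pi"
  shows "sin x / x \<le> sin y / y"
proof -
  have "(\<lambda>t. sin t / t) x \<le> (\<lambda>t. sin t / t) y"
  proof (rule DERIV_nonpos_imp_nonincreasing[OF assms(2)])
    fix t :: real
    assume t: "y \<le> t" "t \<le> x"
    then have "0 < t" using assms by simp
    then have "DERIV (\<lambda>t. sin t / t) t :> (t * cos t - sin t) / t^2"
      by (auto intro!: derivative_eq_intros simp: power2_eq_square mult.commute)
    moreover have "(t * cos t - sin t) / t^2 \<le> 0"
      using x_cos_le_sin[of t] t assms \<open>0 < t\<close> by (intro divide_nonpos_nonneg) auto
    ultimately show "\<exists>d. DERIV (\<lambda>t. sin t / t) t :> d \<and> d \<le> 0" by blast
  qed
  then show ?thesis by simp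
qed

lemma four_div_three_minus_cos_ge:
  fixes a :: real
  shows "(4 - a^2) / (4 + a^2) \<le> 4 / (3 - cos a) - 1"
proof -
  define w where "w = (sin (a/2))^2"
  have "0 \<le> w" unfolding w_def by simp
  have "cos a = 1 - 2 * w"
    using cos_double_sin[of "a/2"] unfolding w_def by simp
  then have "4 / (3 - cos a) - 1 = 4 / (2 + 2 * w) - 1"
    by simp
  also have "\<dots> = 2 / (1 + w) - 1"
    using add_pos_nonneg[of 1 w] by (simp add: w_def field_simps)
  finally have "4 / (3 - cos a) - 1 = 2 / (1 + w) - 1" .
  moreover have "w \<le> a^2/4"
    using abs_sin_x_le_abs_x[of "a/2"] power_mono[of "\<bar>sin (a/2)\<bar>" "\<bar>a/2\<bar>" 2]
    unfolding w_def by (simp add: power_divide)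
  then have "2 / (1 + a^2/4) \<le> 2 / (1 + w)"
    using \<open>0 \<le> w\<close> by (intro divide_left_mono mult_pos_pos) auto
  moreover have "(4 - a^2) / (4 + a^2) = 2 / (1 + a^2/4) - 1"
    using add_pos_nonneg[of 4 "a^2"] by (simp add: field_simps)
  ultimately show ?thesis by linarith
qed

definition binomial_trunc3 :: "real \<Rightarrow> real \<Rightarrow> real" where
  "binomial_trunc3 n v = 1 - n * v + n * (n - 1) / 2 * v^2 - n * (n - 1) * (n - 2) / 6 * v^3"

lemma binomial_trunc3_le_power:
  fixes v :: real
  assumes "0 \<le> v" "v \<le> 1"
  shows "binomial_trunc3 (real k) v \<le> (1 - v) ^ k"
proof (induction k)
  case 0
  then show ?case by (simp add: binomial_trunc3_def)
next
  case (Suc k)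
  have "(1 - v) * binomial_trunc3 (real k) v
      = binomial_trunc3 (real (Suc k)) v + real k * (real k - 1) * (real k - 2) / 6 * v^4"
    by (simp add: binomial_trunc3_def field_simps power2_eq_square power3_eq_cube numeral_eq_Suc)
  moreover have "0 \<le> real k * (real k - 1) * (real k - 2)"
    by (cases "k \<ge> 2") (auto simp: not_le less_Suc_eq numeral_2_eq_2)
  ultimately have "binomial_trunc3 (real (Suc k)) v \<le> (1 - v) * binomial_trunc3 (real k) v"
    by simp
  moreover have "(1 - v) * binomial_trunc3 (real k) v \<le> (1 - v) * (1 - v) ^ k"
    using Suc assms by (intro mult_left_mono) auto
  ultimately show ?case by simp
qed

lemma pi_squared_bounds: "98696/10000 \<le> pi^2" "pi^2 \<le> (98697/10000 :: real)"
proof -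
  have "(3.141592653588::real)^2 \<le> pi^2"
    using pi_approx(1) by (intro power_mono) auto
  then show "98696/10000 \<le> pi^2" by (simp add: power2_eq_square)
  have "pi^2 \<le> (3.1415926535899::real)^2"
    using pi_approx(2) pi_gt_zero by (intro power_mono) auto
  then show "pi^2 \<le> (98697/10000 :: real)" by (simp add: power2_eq_square)
qed

lemma binomial_gap_poly_pos:
  fixes n p :: real
  assumes n: "n \<ge> 3" and p: "98696/10000 \<le> p" "p \<le> 98697/10000"
  shows "0 < 384*n^6 - 160*n^5*p + 288*n^4*p - 80*n^3*p - 108*n^2*p^2 + 60*n*p^2 - 9*p^3"
proof -
  define q0 :: real where "q0 = 98696/10000"
  define q1 :: real where "q1 = 98697/10000"
  \<comment> \<open>Replace \<open>p\<close> in each monomial by the end of its enclosure that lowers the sum.\<close>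
  have "n^5*p \<le> n^5*q1" "n^4*q0 \<le> n^4*p" "n^3*p \<le> n^3*q1"
    using p n unfolding q0_def q1_def by (auto intro: mult_left_mono)
  moreover have "n^2*p^2 \<le> n^2*q1^2" "n*q0^2 \<le> n*p^2" "p^3 \<le> q1^3"
    using p n unfolding q0_def q1_def by (auto intro!: mult_left_mono power_mono)
  moreover
  obtain t where t: "t \<ge> 0" "n = 3 + t"
    using n by (intro that[of "n - 3"]) auto
  \<comment> \<open>Expanded in \<open>t = n - 3\<close>, every coefficient is positive.\<close>
  have "0 < 384*n^6 - 160*n^5*q1 + 288*n^4*q0 - 80*n^3*q1 - 108*n^2*q1^2 + 60*n*q0^2 - 9*q1^3"
  proof -
    have e: "384*n^6 - 160*n^5*q1 + 288*n^4*q0 - 80*n^3*q1 - 108*n^2*q1^2 + 60*n*q0^2 - 9*q1^3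
       = 384*t^6 + (384*18 - 160*q1)*t^5 + (384*135 - 160*q1*15 + 288*q0)*t^4
         + (384*540 - 160*q1*90 + 288*q0*12 - 80*q1)*t^3
         + (384*1215 - 160*q1*270 + 288*q0*54 - 80*q1*9 - 108*q1^2)*t^2
         + (384*1458 - 160*q1*405 + 288*q0*108 - 80*q1*27 - 108*q1^2*6 + 60*q0^2)*t
         + (384*729 - 160*q1*243 + 288*q0*81 - 80*q1*27 - 108*q1^2*9 + 60*q0^2*3 - 9*q1^3)"
      unfolding t(2) by (simp add: algebra_simps power2_eq_square power3_eq_cube numeral_eq_Suc)
    show ?thesis unfolding e unfolding q0_def q1_def using t(1)
      by (simp add: power2_eq_square power3_eq_cube;
          intro add_nonneg_pos add_nonneg_nonneg mult_nonneg_nonneg zero_le_power; simp)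
  qed
  ultimately show ?thesis by linarith
qed

lemma taylor_bound_lt_binomial_trunc3:
  fixes n p :: real
  assumes n: "n \<ge> 3" and p: "98696/10000 \<le> p" "p \<le> 98697/10000"
  shows "1 - p/(2*n) + 3*p^2/(40*n^2) < binomial_trunc3 n (2*p/(4*n^2 + p))"
proof -
  define D where "D = 4*n^2 + p"
  define Q where "Q = 384*n^6 - 160*n^5*p + 288*n^4*p - 80*n^3*p - 108*n^2*p^2 + 60*n*p^2 - 9*p^3"
  have "0 < D" "0 < n" unfolding D_def using n p by (auto intro: add_nonneg_pos)
  then have "(binomial_trunc3 n (2*p/D) - (1 - p/(2*n) + 3*p^2/(40*n^2))) * (120*n^2*D^3) = p^2 * Q"
    unfolding binomial_trunc3_def Q_def
    by (simp add: field_simps) (simp add: D_def algebra_simps power2_eq_square power3_eq_cube numeral_eq_Suc)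
  moreover have "0 < p^2 * Q" "0 < 120*n^2*D^3"
    using binomial_gap_poly_pos[OF n p] p \<open>0 < D\<close> \<open>0 < n\<close> unfolding Q_def by auto
  ultimately have "0 < binomial_trunc3 n (2*p/D) - (1 - p/(2*n) + 3*p^2/(40*n^2))"
    using zero_less_mult_pos2 by metis
  then show ?thesis unfolding D_def by linarith
qed

lemma sinc_lt_power:
  fixes h :: nat
  assumes "h \<ge> 3"
  shows "sin (pi * sqrt (3 / real h)) / (pi * sqrt (3 / real h))
           < (4 / (3 - cos (pi / real h)) - 1) ^ h"
proof -
  define n where "n = real h"
  define p :: real where "p = pi^2"
  define y where "y = pi * sqrt (3 / n)"
  define v where "v = 2*p/(4*n^2 + p)"
  have n: "n \<ge> 3" and p: "98696/10000 \<le> p" "p \<le> 98697/10000"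
    using assms pi_squared_bounds unfolding n_def p_def by auto
  have "0 < y" "y \<le> pi"
    using n mult_left_mono[of "sqrt (3/n)" 1 pi] unfolding y_def by auto
  then have "0 < y" "y \<le> 8" using pi_less_4 by auto
  have "y^2 = 3*p/n"
    using n unfolding y_def p_def by (simp add: power_mult_distrib)
  have "0 < 4*n^2 + p" using p by (intro add_nonneg_pos) auto
  have "p \<le> 4*n^2" using p n power_mono[of 3 n 2] by simp
  then have v: "0 \<le> v" "v \<le> 1"
    using p \<open>0 < 4*n^2 + p\<close> unfolding v_def by auto
  have "n^2 * (4 - (pi/n)^2) = 4*n^2 - p" "n^2 * (4 + (pi/n)^2) = 4*n^2 + p"
    using n unfolding p_def by (simp_all add: power_divide algebra_simps)
  moreover have "1 - v = (4*n^2 - p) / (4*n^2 + p)"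
    using \<open>0 < 4*n^2 + p\<close> unfolding v_def by (simp add: field_simps)
  ultimately have "1 - v = (n^2 * (4 - (pi/n)^2)) / (n^2 * (4 + (pi/n)^2))"
    by simp
  then have v_eq: "1 - v = (4 - (pi/n)^2) / (4 + (pi/n)^2)"
    using n by simp
  have "sin y / y \<le> 1 - (y^2)/6 + (y^2)^2/120"
    using sinc_le_taylor4 \<open>0 < y\<close> \<open>y \<le> 8\<close> .
  also have "\<dots> = 1 - p/(2*n) + 3*p^2/(40*n^2)"
    using n unfolding \<open>y^2 = 3*p/n\<close> by (simp add: field_simps power2_eq_square)
  also have "\<dots> < binomial_trunc3 n v"
    unfolding v_def by (rule taylor_bound_lt_binomial_trunc3[OF n p])
  also have "\<dots> \<le> (1 - v) ^ h"
    unfolding n_def using v by (rule binomial_trunc3_le_power)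
  also have "\<dots> \<le> (4 / (3 - cos (pi/n)) - 1) ^ h"
    using v four_div_three_minus_cos_ge[of "pi/n"] unfolding v_eq[symmetric]
    by (intro power_mono) auto
  finally show ?thesis unfolding y_def n_def .
qed

theorem mainTheorem8:
  fixes h :: nat
  assumes "h \<ge> 3"
  shows "sin (pi * sqrt (3 / real h)) / (pi * sqrt (3 / real h))
           < (4 / (3 - cos (pi / real h)) - 1) ^ h
         \<and> (\<forall>x::real. 0 < x \<and> x < pi \<and> sin x / x = (4 / (3 - cos (pi / real h)) - 1) ^ h
            \<longrightarrow> x < pi * sqrt (3 / real h))"
proof (intro conjI allI impI)
  define y where "y = pi * sqrt (3 / real h)"
  show lt: "sin y / y < (4 / (3 - cos (pi / real h)) - 1) ^ h"
    unfolding y_def using sinc_lt_power[OF assms] .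
  fix x :: real
  assume x: "0 < x \<and> x < pi \<and> sin x / x = (4 / (3 - cos (pi / real h)) - 1) ^ h"
  have "0 < y" unfolding y_def using assms by simp
  show "x < y"
  proof (rule ccontr)
    assume "\<not> x < y"
    then have "sin x / x \<le> sin y / y"
      using sinc_antimono[of y x] \<open>0 < y\<close> x by simp
    then show False using x lt by simp
  qed
qed

end
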